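(* Let $L=L(m,n;k,l)$ be an $L$-shaped supergrid graph with $m-k=n-l=1$ and $l>1$, and let $s=(s_x,s_y)$, $t=(t_x,t_y)$ be distinct vertices of $L$. Then: (UB1) if $s_y,t_y\le l$, every simple path between $s$ and $t$ has at most $|t_y-s_y|+1$ vertices; (UB2) if $s_y<l$ and $t_x>1$, every simple path between $s$ and $t$ has at most $n-s_y+t_x$ vertices; (UB3) if $s_x=t_x=1$, $\max\{s_y,t_y\}=n$, and either $k>1$ or ($k=1$ and $\min\{s_y,t_y\}>1$), every simple path between $s$ and $t$ has at most $|t_y-s_y|+2$ vertices.
   Context: The infinite supergrid graph has as vertices all points $(x,y)\in\mathbb{Z}^2$, two distinct vertices $u,v$ being adjacent iff $|u_x-v_x|\le 1$ and $|u_y-v_y|\le 1$. For integers $m,n>1$ and $k,l\ge 1$ with $m-k\ge 1$, $n-l\ge 1$, $L(m,n;k,l)$ is the subgraph induced by $\{(x,y):1\le x\le m,\ 1\le y\le n\}\setminus\{(x,y): m-k+1\le x\le m,\ 1\le y\le l\}$. The length of a path is its number of vertices. *)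

theory Defs
  imports Main
begin

definition sg_adj :: "int \<times> int \<Rightarrow> int \<times> int \<Rightarrow> bool" where
  "sg_adj u v \<longleftrightarrow> u \<noteq> v \<and> \<bar>fst u - fst v\<bar> \<le> 1 \<and> \<bar>snd u - snd v\<bar> \<le> 1"

definition Lshape :: "int \<Rightarrow> int \<Rightarrow> int \<Rightarrow> int \<Rightarrow> (int \<times> int) set" where
  "Lshape m n k l =
     {(x, y). 1 \<le> x \<and> x \<le> m \<and> 1 \<le> y \<and> y \<le> n}
     - {(x, y). m - k + 1 \<le> x \<and> x \<le> m \<and> 1 \<le> y \<and> y \<le> l}"

text \<open>A simple path from s to t in the subgraph induced by V, given as the list of its
  vertices; its length is the number of vertices (length of the list).\<close>
definition sg_path :: "(int \<times> int) set \<Rightarrow> int \<times> int \<Rightarrow> int \<times> int \<Rightarrow> (int \<times> int) list \<Rightarrow> bool" where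
  "sg_path V s t P \<longleftrightarrow> P \<noteq> [] \<and> hd P = s \<and> last P = t \<and> distinct P \<and> set P \<subseteq> V \<and>
     (\<forall>i. Suc i < length P \<longrightarrow> sg_adj (P ! i) (P ! Suc i))"

end

theory Submission
  imports Defs
begin

text \<open>When \<open>m - k = n - l = 1\<close> the graph \<open>L(m,n;k,l)\<close> is a column followed by a row, i.e. a
  path together with one chord, the diagonal edge from \<open>(1,l)\<close> to \<open>(2,n)\<close> that bypasses the
  corner \<open>(1,n)\<close>. Numbering the vertices along this path, consecutive vertices of any walk have
  numbers differing by at most one, except across the chord. Hence a walk can only get past a
  number \<open>c\<close> other than that of the corner by visiting \<open>c\<close>. A simple path therefore never leaves
  an interval \<open>[lo, hi]\<close> that contains the numbers of its endpoints and whose ends avoid the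
  corner's number: leaving it and coming back would visit an end twice. Each of the three bounds is the size of such an
  interval.\<close>

definition jumps_over :: "'a::linorder \<Rightarrow> 'a \<Rightarrow> 'a \<Rightarrow> bool" where
  "jumps_over c u v \<longleftrightarrow> min u v < c \<and> c < max u v"

lemma no_jump_intermediate_value:
  fixes c :: "'a::linorder"
  assumes "successively (\<lambda>u v. \<not> jumps_over c u v) xs" "xs \<noteq> []"
    and "min (hd xs) (last xs) \<le> c" "c \<le> max (hd xs) (last xs)"
  shows "c \<in> set xs"
  using assms
proof (induction xs rule: induct_list012)
  case (3 x y zs)
  show ?case
  proof (cases "min y (last (y # zs)) \<le> c \<and> c \<le> max y (last (y # zs))")
    case True
    then show ?thesis using "3.IH"(2) "3.prems"(1) by auto
  next
    case False
    then show ?thesis using "3.prems" by (auto simp: jumps_over_def min_def max_def split: if_splits)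
  qed
qed auto

lemma distinct_no_jump_never_crosses_back:
  fixes c :: "'a::linorder"
  assumes "distinct xs" "successively (\<lambda>u v. \<not> jumps_over c u v) xs"
    and "x \<in> set xs" "x \<noteq> c"
    and "min (hd xs) x \<le> c" "c \<le> max (hd xs) x"
    and "min x (last xs) \<le> c" "c \<le> max x (last xs)"
  shows False
proof -
  obtain ys zs where xs: "xs = ys @ x # zs" using split_list[OF assms(3)] by blast
  have "c \<in> set (ys @ [x])"
    by (rule no_jump_intermediate_value) (use assms xs in \<open>auto simp: successively_append_iff hd_append\<close>)
  then have "c \<in> set ys" using assms(4) by simp
  moreover have "c \<in> set (x # zs)"
    by (rule no_jump_intermediate_value) (use assms xs in \<open>auto simp: successively_append_iff\<close>)
  then have "c \<in> set zs" using assms(4) by simp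
  ultimately show False using assms(1) xs by auto
qed

lemma distinct_no_jump_bounded:
  fixes lo hi :: "'a::linorder"
  assumes "distinct xs" "xs \<noteq> []"
    and "successively (\<lambda>u v. \<not> jumps_over lo u v) xs"
    and "successively (\<lambda>u v. \<not> jumps_over hi u v) xs"
    and "lo \<le> hd xs" "hd xs \<le> hi" "lo \<le> last xs" "last xs \<le> hi"
  shows "set xs \<subseteq> {lo..hi}"
proof
  fix x assume x: "x \<in> set xs"
  show "x \<in> {lo..hi}"
  proof (rule ccontr)
    assume "x \<notin> {lo..hi}"
    then consider "x < lo" | "hi < x" by force
    then show False
    proof cases
      case 1
      show False
        by (rule distinct_no_jump_never_crosses_back[OF assms(1,3) x]) (use 1 assms in auto)
    next
      case 2
      show False
        by (rule distinct_no_jump_never_crosses_back[OF assms(1,4) x]) (use 2 assms in auto)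
    qed
  qed
qed

lemma Lshape_thin_iff:
  assumes "m - k = 1" "n - l = 1" "k \<ge> 1" "l \<ge> 1"
  shows "(x, y) \<in> Lshape m n k l \<longleftrightarrow> (x = 1 \<and> 1 \<le> y \<and> y \<le> n) \<or> (y = n \<and> 1 \<le> x \<and> x \<le> m)"
  using assms by (auto simp: Lshape_def)

text \<open>The number of a vertex along the thin L; the corner \<open>(1,n)\<close> gets \<open>n = l + 1\<close>.\<close>
definition arm_pos :: "int \<times> int \<Rightarrow> int" where
  "arm_pos v = fst v + snd v - 1"

lemma arm_pos_inj_on_Lshape:
  assumes "m - k = 1" "n - l = 1" "k \<ge> 1" "l \<ge> 1"
  shows "inj_on arm_pos (Lshape m n k l)"
  using Lshape_thin_iff[OF assms] by (auto simp: inj_on_def arm_pos_def)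

lemma sg_adj_arm_pos_no_jump:
  assumes "m - k = 1" "n - l = 1" "k \<ge> 1" "l \<ge> 1"
    and "u \<in> Lshape m n k l" "v \<in> Lshape m n k l" "sg_adj u v" "c \<noteq> l + 1"
  shows "\<not> jumps_over c (arm_pos u) (arm_pos v)"
proof -
  obtain a b a' b' where uv: "u = (a, b)" "v = (a', b')" by fastforce
  show ?thesis
    using assms Lshape_thin_iff[OF assms(1-4), of a b] Lshape_thin_iff[OF assms(1-4), of a' b']
    unfolding uv arm_pos_def sg_adj_def jumps_over_def by auto
qed

lemma sg_path_Lshape_thin_length:
  assumes "m - k = 1" "n - l = 1" "k \<ge> 1" "l \<ge> 1"
    and P: "sg_path (Lshape m n k l) s t P"
    and "lo \<le> arm_pos s" "arm_pos s \<le> hi" "lo \<le> arm_pos t" "arm_pos t \<le> hi"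
    and "lo \<noteq> l + 1" "hi \<noteq> l + 1"
  shows "int (length P) \<le> hi - lo + 1"
proof -
  let ?L = "Lshape m n k l"
  have "P \<noteq> []" "hd P = s" "last P = t" "distinct P" and sub: "set P \<subseteq> ?L"
    and adj: "successively sg_adj P"
    using P by (auto simp: sg_path_def successively_conv_nth)
  have inj: "inj_on arm_pos (set P)"
    using arm_pos_inj_on_Lshape[OF assms(1-4)] sub by (rule inj_on_subset)
  have no_jump: "successively (\<lambda>u v. \<not> jumps_over c u v) (map arm_pos P)" if "c \<noteq> l + 1" for c
    unfolding successively_map
    by (rule successively_mono[OF adj])
       (use sg_adj_arm_pos_no_jump[OF assms(1-4)] sub that in blast)
  have "set (map arm_pos P) \<subseteq> {lo..hi}"
    by (rule distinct_no_jump_bounded)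
       (use \<open>P \<noteq> []\<close> \<open>hd P = s\<close> \<open>last P = t\<close> \<open>distinct P\<close> inj no_jump assms(6-11)
        in \<open>auto simp: distinct_map hd_map last_map\<close>)
  then have "card (arm_pos ` set P) \<le> card {lo..hi}"
    by (intro card_mono) auto
  then have "length P \<le> nat (hi - lo + 1)"
    using inj \<open>distinct P\<close> by (simp add: card_image distinct_card)
  moreover have "lo \<le> hi" using assms(6,7) by simp
  ultimately show ?thesis by simp
qed

theorem lemma10:
  fixes m n k l sx sy tx ty :: int
  assumes "m > 1" "n > 1" "k \<ge> 1" "l \<ge> 1"
    and "m - k = 1" "n - l = 1" "l > 1"
    and "(sx, sy) \<in> Lshape m n k l" "(tx, ty) \<in> Lshape m n k l"
    and "(sx, sy) \<noteq> (tx, ty)"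
  shows "(sy \<le> l \<and> ty \<le> l \<longrightarrow>
            (\<forall>P. sg_path (Lshape m n k l) (sx, sy) (tx, ty) P \<longrightarrow>
               int (length P) \<le> \<bar>ty - sy\<bar> + 1))
       \<and> (sy < l \<and> tx > 1 \<longrightarrow>
            (\<forall>P. sg_path (Lshape m n k l) (sx, sy) (tx, ty) P \<longrightarrow>
               int (length P) \<le> n - sy + tx))
       \<and> (sx = 1 \<and> tx = 1 \<and> max sy ty = n \<and> (k > 1 \<or> (k = 1 \<and> min sy ty > 1)) \<longrightarrow>
            (\<forall>P. sg_path (Lshape m n k l) (sx, sy) (tx, ty) P \<longrightarrow>
               int (length P) \<le> \<bar>ty - sy\<bar> + 2))"
proof -
  note thin = assms(5,6,3,4)
  note bound = sg_path_Lshape_thin_length[OF thin]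
  have s: "(sx = 1 \<and> 1 \<le> sy \<and> sy \<le> n) \<or> (sy = n \<and> 1 \<le> sx \<and> sx \<le> m)"
    and t: "(tx = 1 \<and> 1 \<le> ty \<and> ty \<le> n) \<or> (ty = n \<and> 1 \<le> tx \<and> tx \<le> m)"
    using assms(8,9) Lshape_thin_iff[OF thin] by blast+
  have "int (length P) \<le> \<bar>ty - sy\<bar> + 1"
    if "sy \<le> l" "ty \<le> l" "sg_path (Lshape m n k l) (sx, sy) (tx, ty) P" for P
  proof -
    have "int (length P) \<le> max sy ty - min sy ty + 1"
      by (rule bound[OF that(3)]) (use s t that assms(6) in \<open>auto simp: arm_pos_def\<close>)
    then show ?thesis by linarith
  qed
  moreover have "int (length P) \<le> n - sy + tx"
    if "sy < l" "tx > 1" "sg_path (Lshape m n k l) (sx, sy) (tx, ty) P" for P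
  proof -
    have "int (length P) \<le> (tx + l) - sy + 1"
      by (rule bound[OF that(3)]) (use s t that assms(6) in \<open>auto simp: arm_pos_def\<close>)
    then show ?thesis using assms(6) by linarith
  qed
  moreover have "int (length P) \<le> \<bar>ty - sy\<bar> + 2"
    if "sx = 1" "tx = 1" "max sy ty = n" "sg_path (Lshape m n k l) (sx, sy) (tx, ty) P" for P
  proof -
    have "int (length P) \<le> (l + 2) - min sy ty + 1"
      by (rule bound[OF that(4)]) (use s t that assms(6,10) in \<open>auto simp: arm_pos_def\<close>)
    then show ?thesis using that(3) assms(6) by linarith
  qed
  ultimately show ?thesis by blast
qed

end
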